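(* Let $X$ be an L-space and $U\in{\sf ClopUp}(X)$. (1) $\mathrm{cen}\,U\subseteq\mathrm{reg}\,U$. (2) If $X$ is a zero-dimensional L-space, then $X$ is a regular L-space. (3) If $X$ is a Stone L-space, then $X$ is a compact regular L-space.
   Context: A Priestley space is a Stone space $X$ with a partial order such that clopen upsets separate points. An L-space is a Priestley space in which the downset of each clopen set is clopen and the closure of each open upset is open. ${\sf ClopUp}(X)$ is the set of clopen upsets; $\mathrm{cl}$ denotes closure. A biset is a subset that is both an upset and a downset; ${\sf ClopBi}(X)$ is the set of clopen bisets. For $U\in{\sf ClopUp}(X)$: $\mathrm{cen}\,U=\bigcup\{V\in{\sf ClopBi}(X)\mid V\subseteq U\}$; $\mathrm{reg}\,U=\bigcup\{V\in{\sf ClopUp}(X)\mid {\downarrow}V\subseteq U\}$. For $U,V\in{\sf ClopUp}(X)$, $V\ll U$ means that for every open upset $W$, $U\subseteq\mathrm{cl}\,W$ implies $V\subseteq W$; $\ker U=\bigcup\{V\in{\sf ClopUp}(X)\mid V\ll U\}$. $X$ is L-compact if $X=\ker X$. $X$ is a zero-dimensional L-space if $\mathrm{cen}\,U$ is dense in $U$ for every $U\in{\sf ClopUp}(X)$; a Stone L-space is an L-compact zero-dimensional L-space. $X$ is a regular L-space if $\mathrm{reg}\,U$ is dense in $U$ for every $U\in{\sf ClopUp}(X)$; a compact regular L-space is an L-compact regular L-space. *)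

theory Defs
  imports "HOL-Analysis.Analysis"
begin

definition partial_order_on_space :: "'a topology \<Rightarrow> ('a \<Rightarrow> 'a \<Rightarrow> bool) \<Rightarrow> bool" where
  "partial_order_on_space X le \<longleftrightarrow>
     (\<forall>x\<in>topspace X. le x x) \<and>
     (\<forall>x\<in>topspace X. \<forall>y\<in>topspace X. \<forall>z\<in>topspace X. le x y \<longrightarrow> le y z \<longrightarrow> le x z) \<and>
     (\<forall>x\<in>topspace X. \<forall>y\<in>topspace X. le x y \<longrightarrow> le y x \<longrightarrow> x = y)"

definition clopen_in :: "'a topology \<Rightarrow> 'a set \<Rightarrow> bool" where
  "clopen_in X A \<longleftrightarrow> openin X A \<and> closedin X A"

definition upset :: "'a topology \<Rightarrow> ('a \<Rightarrow> 'a \<Rightarrow> bool) \<Rightarrow> 'a set \<Rightarrow> bool" where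
  "upset X le A \<longleftrightarrow> A \<subseteq> topspace X \<and> (\<forall>x\<in>A. \<forall>y\<in>topspace X. le x y \<longrightarrow> y \<in> A)"

definition downset :: "'a topology \<Rightarrow> ('a \<Rightarrow> 'a \<Rightarrow> bool) \<Rightarrow> 'a set \<Rightarrow> bool" where
  "downset X le A \<longleftrightarrow> A \<subseteq> topspace X \<and> (\<forall>x\<in>A. \<forall>y\<in>topspace X. le y x \<longrightarrow> y \<in> A)"

definition down :: "'a topology \<Rightarrow> ('a \<Rightarrow> 'a \<Rightarrow> bool) \<Rightarrow> 'a set \<Rightarrow> 'a set" where
  "down X le A = {y \<in> topspace X. \<exists>x\<in>A. le y x}"

definition ClopUp :: "'a topology \<Rightarrow> ('a \<Rightarrow> 'a \<Rightarrow> bool) \<Rightarrow> 'a set set" where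
  "ClopUp X le = {A. clopen_in X A \<and> upset X le A}"

definition ClopBi :: "'a topology \<Rightarrow> ('a \<Rightarrow> 'a \<Rightarrow> bool) \<Rightarrow> 'a set set" where
  "ClopBi X le = {A. clopen_in X A \<and> upset X le A \<and> downset X le A}"

definition stone_space :: "'a topology \<Rightarrow> bool" where
  "stone_space X \<longleftrightarrow> compact_space X \<and> Hausdorff_space X \<and> X dim_le 0"

definition priestley_space :: "'a topology \<Rightarrow> ('a \<Rightarrow> 'a \<Rightarrow> bool) \<Rightarrow> bool" where
  "priestley_space X le \<longleftrightarrow> stone_space X \<and> partial_order_on_space X le \<and>
     (\<forall>x\<in>topspace X. \<forall>y\<in>topspace X. \<not> le x y \<longrightarrow>
        (\<exists>U\<in>ClopUp X le. x \<in> U \<and> y \<notin> U))"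

definition L_space :: "'a topology \<Rightarrow> ('a \<Rightarrow> 'a \<Rightarrow> bool) \<Rightarrow> bool" where
  "L_space X le \<longleftrightarrow> priestley_space X le \<and>
     (\<forall>A. clopen_in X A \<longrightarrow> clopen_in X (down X le A)) \<and>
     (\<forall>W. openin X W \<and> upset X le W \<longrightarrow> openin X (X closure_of W))"

definition cen :: "'a topology \<Rightarrow> ('a \<Rightarrow> 'a \<Rightarrow> bool) \<Rightarrow> 'a set \<Rightarrow> 'a set" where
  "cen X le U = \<Union>{V \<in> ClopBi X le. V \<subseteq> U}"

definition reg :: "'a topology \<Rightarrow> ('a \<Rightarrow> 'a \<Rightarrow> bool) \<Rightarrow> 'a set \<Rightarrow> 'a set" where
  "reg X le U = \<Union>{V \<in> ClopUp X le. down X le V \<subseteq> U}"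

definition way_below :: "'a topology \<Rightarrow> ('a \<Rightarrow> 'a \<Rightarrow> bool) \<Rightarrow> 'a set \<Rightarrow> 'a set \<Rightarrow> bool" where
  "way_below X le V U \<longleftrightarrow>
     (\<forall>W. openin X W \<and> upset X le W \<longrightarrow> U \<subseteq> X closure_of W \<longrightarrow> V \<subseteq> W)"

definition ker :: "'a topology \<Rightarrow> ('a \<Rightarrow> 'a \<Rightarrow> bool) \<Rightarrow> 'a set \<Rightarrow> 'a set" where
  "ker X le U = \<Union>{V \<in> ClopUp X le. way_below X le V U}"

definition L_compact :: "'a topology \<Rightarrow> ('a \<Rightarrow> 'a \<Rightarrow> bool) \<Rightarrow> bool" where
  "L_compact X le \<longleftrightarrow> topspace X = ker X le (topspace X)"

text \<open>"S is dense in U" for S \<subseteq> U: U \<subseteq> closure of S.\<close>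
definition zero_dim_L_space :: "'a topology \<Rightarrow> ('a \<Rightarrow> 'a \<Rightarrow> bool) \<Rightarrow> bool" where
  "zero_dim_L_space X le \<longleftrightarrow> L_space X le \<and>
     (\<forall>U\<in>ClopUp X le. U \<subseteq> X closure_of (cen X le U))"

definition stone_L_space :: "'a topology \<Rightarrow> ('a \<Rightarrow> 'a \<Rightarrow> bool) \<Rightarrow> bool" where
  "stone_L_space X le \<longleftrightarrow> L_compact X le \<and> zero_dim_L_space X le"

definition regular_L_space :: "'a topology \<Rightarrow> ('a \<Rightarrow> 'a \<Rightarrow> bool) \<Rightarrow> bool" where
  "regular_L_space X le \<longleftrightarrow> L_space X le \<and>
     (\<forall>U\<in>ClopUp X le. U \<subseteq> X closure_of (reg X le U))"

definition compact_regular_L_space :: "'a topology \<Rightarrow> ('a \<Rightarrow> 'a \<Rightarrow> bool) \<Rightarrow> bool" where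
  "compact_regular_L_space X le \<longleftrightarrow> L_compact X le \<and> regular_L_space X le"

end

theory Submission
  imports Defs
begin

text \<open>A clopen biset contained in U is a clopen upset whose downset is itself, hence lies in U;
so cen U \<subseteq> reg U, and density of cen U in U passes to the larger set reg U.\<close>

lemma down_subset_if_downset: "downset X le V \<Longrightarrow> down X le V \<subseteq> V"
  unfolding downset_def down_def by auto

lemma cen_subset_reg: "cen X le U \<subseteq> reg X le U"
proof
  fix x assume "x \<in> cen X le U"
  then obtain V where V: "V \<in> ClopBi X le" "V \<subseteq> U" "x \<in> V"
    unfolding cen_def by auto
  then have "V \<in> ClopUp X le" "down X le V \<subseteq> U"
    using down_subset_if_downset[of X le V] unfolding ClopBi_def ClopUp_def by auto
  with V show "x \<in> reg X le U"
    unfolding reg_def by auto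
qed

lemma zero_dim_L_space_imp_regular_L_space:
  assumes "zero_dim_L_space X le"
  shows "regular_L_space X le"
  unfolding regular_L_space_def
proof (intro conjI ballI)
  show "L_space X le"
    using assms unfolding zero_dim_L_space_def by auto
  fix U assume "U \<in> ClopUp X le"
  then have "U \<subseteq> X closure_of (cen X le U)"
    using assms unfolding zero_dim_L_space_def by auto
  also have "\<dots> \<subseteq> X closure_of (reg X le U)"
    by (rule closure_of_mono[OF cen_subset_reg])
  finally show "U \<subseteq> X closure_of (reg X le U)" .
qed

lemma stone_L_space_imp_compact_regular_L_space:
  "stone_L_space X le \<Longrightarrow> compact_regular_L_space X le"
  unfolding stone_L_space_def compact_regular_L_space_def
  using zero_dim_L_space_imp_regular_L_space by blast

theorem lemma5p12:
  fixes X :: "'a topology" and le :: "'a \<Rightarrow> 'a \<Rightarrow> bool" and U :: "'a set"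
  assumes "L_space X le" and "U \<in> ClopUp X le"
  shows "cen X le U \<subseteq> reg X le U \<and>
         (zero_dim_L_space X le \<longrightarrow> regular_L_space X le) \<and>
         (stone_L_space X le \<longrightarrow> compact_regular_L_space X le)"
  using cen_subset_reg[of X le U] zero_dim_L_space_imp_regular_L_space[of X le]
    stone_L_space_imp_compact_regular_L_space[of X le] by blast

end
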